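(* Let $M$ be a linear SEM-UR satisfying SEM-UR faithfulness. Then every linear SEM-UR on the same observed variables whose mixing matrix equals $\mathbf W^{UR}(M)$ up to permutation and nonzero scaling of columns and which satisfies SEM-UR faithfulness has the same (unweighted) causal diagram as $M$, up to relabeling of the latent variables. Consequently, under separability and SEM-UR faithfulness, the structure of a linear SEM-UR is uniquely identifiable.
   Context: Linear SEM-UR: observed $X=(X_1,\dots,X_q)^\top$, latent $H=(H_1,\dots,H_l)^\top$, $H=N_H$, $X=\mathbf BH+\mathbf AX+N_X$, $\mathbf A$ strictly lower triangular, all noise terms mutually independent and nondegenerate. Causal diagram: DAG on $\mathcal H\cup\mathcal X$ with edge $H_i\to X_j$ iff $b_{ji}\neq0$ and $X_k\to X_j$ iff $a_{jk}\neq 0$. Mixing matrix $\mathbf W^{UR}=[(\mathbf I-\mathbf A)^{-1}\mathbf B\;\;(\mathbf I-\mathbf A)^{-1}]$, rows indexed by observed variables, columns by noise terms; its $(X_j,N_V)$ entry is the total causal effect of $V$ on $X_j$ (sum over directed paths of products of edge weights; $1$ if $V=X_j$). Separability: $\mathbf W^{UR}$ can be recovered from the distribution of $X$ up to column permutation and nonzero scaling. $Pa,Ch,De$: parents, children, descendants ($De(V)$ excludes $V$). $\mathrm{TC}(V,\mathcal V)$: vector of total causal effects of $V$ on the elements of $\mathcal V$. Possible children of $V_i$: $De(V_i)$ together with all latent $H\neq V_i$ with $Ch(H)\subseteq De(V_i)$. SEM-UR faithfulness: (a) the total causal effect of any observed or latent variable on any of its descendants is nonzero; (b1) for each variable $V_i$,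 $\mathrm{TC}(V_i,De(V_i))$ is not in the span of any $k\le|Ch(V_i)|$ vectors of $\{\mathrm{TC}(V,De(V_i)):V$ a possible child of $V_i\}$, except when $k=|Ch(V_i)|$ and every latent $H_l$ corresponding to one of these vectors has $Ch(H_l)\subseteq Ch(V_i)$; (b2) if $V_i$ is latent then for each child $X_j$ of $V_i$, $\mathrm{TC}(V_i,De(V_i)\setminus\{X_j\})$ is not in the span of any $k\le|Ch(X_j)\cup Ch(V_i)|-1$ vectors of $\{\mathrm{TC}(V,De(V_i)\setminus\{X_j\}):V$ a possible child of $X_j\}$, except when $k=|Ch(X_j)\cup Ch(V_i)|-1$ and every latent $H_l$ among them has $Ch(H_l)\subseteq Ch(X_j)\cup Ch(V_i)$. *)

theory Defs
  imports "Jordan_Normal_Form.Gauss_Jordan_Elimination"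
begin

text \<open>A linear SEM-UR with q observed variables X_0..X_(q-1) and l latent variables
  H_0..H_(l-1) is given by matrices A (q x q, strictly lower triangular) and B (q x l):
  H = N_H, X = B H + A X + N_X.  The noise distributions play no role in the
  structural statement and are not modelled.\<close>

datatype node = Lat nat | Obs nat

definition sem_ur :: "nat \<Rightarrow> nat \<Rightarrow> real mat \<Rightarrow> real mat \<Rightarrow> bool" where
  "sem_ur q l A B \<longleftrightarrow> A \<in> carrier_mat q q \<and> B \<in> carrier_mat q l \<and>
     (\<forall>j<q. \<forall>k<q. j \<le> k \<longrightarrow> A $$ (j, k) = 0)"

definition nodes :: "nat \<Rightarrow> nat \<Rightarrow> node set" where
  "nodes q l = Lat ` {..<l} \<union> Obs ` {..<q}"

definition edges :: "nat \<Rightarrow> nat \<Rightarrow> real mat \<Rightarrow> real mat \<Rightarrow> (node \<times> node) set" where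
  "edges q l A B =
     {(Lat i, Obs j) | i j. i < l \<and> j < q \<and> B $$ (j, i) \<noteq> 0} \<union>
     {(Obs k, Obs j) | k j. k < q \<and> j < q \<and> A $$ (j, k) \<noteq> 0}"

fun edge_weight :: "real mat \<Rightarrow> real mat \<Rightarrow> node \<Rightarrow> node \<Rightarrow> real" where
  "edge_weight A B (Lat i) (Obs j) = B $$ (j, i)"
| "edge_weight A B (Obs k) (Obs j) = A $$ (j, k)"
| "edge_weight A B _ _ = 0"

definition children :: "nat \<Rightarrow> nat \<Rightarrow> real mat \<Rightarrow> real mat \<Rightarrow> node \<Rightarrow> node set" where
  "children q l A B V = {W. (V, W) \<in> edges q l A B}"

definition descendants :: "nat \<Rightarrow> nat \<Rightarrow> real mat \<Rightarrow> real mat \<Rightarrow> node \<Rightarrow> node set" where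
  "descendants q l A B V = {W. (V, W) \<in> (edges q l A B)\<^sup>+}"

definition dir_paths :: "nat \<Rightarrow> nat \<Rightarrow> real mat \<Rightarrow> real mat \<Rightarrow> node \<Rightarrow> node \<Rightarrow> node list set" where
  "dir_paths q l A B u v = {p. p \<noteq> [] \<and> hd p = u \<and> last p = v \<and>
      (\<forall>i. Suc i < length p \<longrightarrow> (p ! i, p ! Suc i) \<in> edges q l A B)}"

definition path_weight :: "real mat \<Rightarrow> real mat \<Rightarrow> node list \<Rightarrow> real" where
  "path_weight A B p = (\<Prod>i<length p - 1. edge_weight A B (p ! i) (p ! Suc i))"

definition total_effect :: "nat \<Rightarrow> nat \<Rightarrow> real mat \<Rightarrow> real mat \<Rightarrow> node \<Rightarrow> node \<Rightarrow> real" where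
  "total_effect q l A B u v = (\<Sum>p\<in>dir_paths q l A B u v. path_weight A B p)"

text \<open>Mixing matrix W^UR = [(I - A)^-1 B, (I - A)^-1]: q rows, l + q columns; column i < l
  corresponds to N_(H_i), column l + k to N_(X_k).\<close>
definition mixing_matrix :: "nat \<Rightarrow> nat \<Rightarrow> real mat \<Rightarrow> real mat \<Rightarrow> real mat" where
  "mixing_matrix q l A B =
     (let T = the (mat_inverse (1\<^sub>m q - A)) in
      mat q (l + q) (\<lambda>(j, c). if c < l then (T * B) $$ (j, c) else T $$ (j, c - l)))"

definition equal_up_to_perm_scaling :: "real mat \<Rightarrow> real mat \<Rightarrow> bool" where
  "equal_up_to_perm_scaling W' W \<longleftrightarrow> dim_row W' = dim_row W \<and>
     (\<exists>\<sigma> c. bij_betw \<sigma> {..<dim_col W'} {..<dim_col W} \<and>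
        (\<forall>k<dim_col W'. c k \<noteq> (0::real)) \<and>
        (\<forall>j<dim_row W'. \<forall>k<dim_col W'. W' $$ (j, k) = c k * W $$ (j, \<sigma> k)))"

definition possible_children :: "nat \<Rightarrow> nat \<Rightarrow> real mat \<Rightarrow> real mat \<Rightarrow> node \<Rightarrow> node set" where
  "possible_children q l A B V = descendants q l A B V \<union>
     {Lat h | h. h < l \<and> Lat h \<noteq> V \<and> children q l A B (Lat h) \<subseteq> descendants q l A B V}"

definition TC_in_span :: "nat \<Rightarrow> nat \<Rightarrow> real mat \<Rightarrow> real mat \<Rightarrow> node \<Rightarrow> node set \<Rightarrow> node set \<Rightarrow> bool" where
  "TC_in_span q l A B V D S \<longleftrightarrow>
     (\<exists>c. \<forall>X\<in>D. total_effect q l A B V X = (\<Sum>U\<in>S. c U * total_effect q l A B U X))"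

definition is_latent :: "node \<Rightarrow> bool" where
  "is_latent V \<longleftrightarrow> (\<exists>h. V = Lat h)"

definition sem_ur_faithful :: "nat \<Rightarrow> nat \<Rightarrow> real mat \<Rightarrow> real mat \<Rightarrow> bool" where
  "sem_ur_faithful q l A B \<longleftrightarrow>
     \<comment> \<open>(a)\<close>
     (\<forall>V\<in>nodes q l. \<forall>X\<in>descendants q l A B V. total_effect q l A B V X \<noteq> 0) \<and>
     \<comment> \<open>(b1)\<close>
     (\<forall>V\<in>nodes q l. \<forall>S. S \<subseteq> possible_children q l A B V \<longrightarrow>
        card S \<le> card (children q l A B V) \<longrightarrow>
        TC_in_span q l A B V (descendants q l A B V) S \<longrightarrow>
        card S = card (children q l A B V) \<and>
        (\<forall>U\<in>S. is_latent U \<longrightarrow> children q l A B U \<subseteq> children q l A B V)) \<and>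
     \<comment> \<open>(b2)\<close>
     (\<forall>V\<in>nodes q l. is_latent V \<longrightarrow> (\<forall>X\<in>children q l A B V. \<forall>S.
        S \<subseteq> possible_children q l A B X \<longrightarrow>
        card S \<le> card (children q l A B X \<union> children q l A B V) - 1 \<longrightarrow>
        TC_in_span q l A B V (descendants q l A B V - {X}) S \<longrightarrow>
        card S = card (children q l A B X \<union> children q l A B V) - 1 \<and>
        (\<forall>U\<in>S. is_latent U \<longrightarrow>
           children q l A B U \<subseteq> children q l A B X \<union> children q l A B V)))"

fun relabel :: "(nat \<Rightarrow> nat) \<Rightarrow> node \<Rightarrow> node" where
  "relabel \<pi> (Lat i) = Lat (\<pi> i)"
| "relabel \<pi> (Obs j) = Obs j"

end

theory Submission
  imports Defs "Jordan_Normal_Form.Determinant"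
begin

text \<open>The column of the mixing matrix belonging to a node V is the vector TC(V) of total effects
  of V on the observed variables, so a column matching of two models is a bijection between their
  nodes preserving these vectors up to scale. By faithfulness (a) the support of TC(V) consists of
  V itself (if observed) and its observed descendants, and the vectors of the observed variables
  are unitriangular, hence independent. Faithfulness (b1) and (b2) turn "TC(V) on De(V) is spanned
  by few possible children" into information about the children of V, and such spans carry over
  from one model to the other. Expanding every column along the children of its node in either
  model yields inequalities between the numbers of children in both directions and then inclusions
  of the children sets: observed variables have the same children, and each latent variable is
  matched, directly or through the observed variable its column was assigned to, with a latent
  variable of the other model having the same children.\<close>

lemma chain_Cons_iff:
  assumes "p \<noteq> []"
  shows "(\<forall>i. Suc i < length (u # p) \<longrightarrow> ((u # p) ! i, (u # p) ! Suc i) \<in> R) \<longleftrightarrow>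
         (u, hd p) \<in> R \<and> (\<forall>i. Suc i < length p \<longrightarrow> (p ! i, p ! Suc i) \<in> R)"
  using assms by (auto simp: hd_conv_nth nth_Cons split: nat.splits)

lemma subset_if_card_union_le:
  assumes "finite B" "finite C" "x \<in> C" "x \<notin> B" "card (B \<union> C) \<le> Suc (card B)"
  shows "C - {x} \<subseteq> B"
proof
  fix y assume y: "y \<in> C - {x}"
  show "y \<in> B"
  proof (rule ccontr)
    assume "y \<notin> B"
    then have "card (insert x (insert y B)) = card B + 2" using assms y by auto
    moreover have "card (insert x (insert y B)) \<le> card (B \<union> C)"
      using assms y by (intro card_mono) auto
    ultimately show False using assms(5) by linarith
  qed
qed

lemma Obs_in_nodes_iff [simp]: "Obs k \<in> nodes q l \<longleftrightarrow> k < q"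
  and Lat_in_nodes_iff [simp]: "Lat h \<in> nodes q l \<longleftrightarrow> h < l"
  unfolding nodes_def by auto

lemma edge_in_nodes: "(u, v) \<in> edges q l A B \<Longrightarrow> u \<in> nodes q l \<and> (\<exists>j<q. v = Obs j)"
  unfolding edges_def nodes_def by auto

lemma edges_eq_Sigma: "edges q l A B = Sigma (nodes q l) (children q l A B)"
  unfolding children_def by (auto dest: edge_in_nodes)

lemma children_subset_Obs: "children q l A B V \<subseteq> Obs ` {..<q}"
  unfolding children_def using edge_in_nodes by blast

lemma finite_children: "finite (children q l A B V)"
  by (rule finite_subset[OF children_subset_Obs]) simp

lemma Lat_notin_children: "Lat h \<notin> children q l A B V"
  using children_subset_Obs by blast

lemma relabel_nodes:
  assumes "bij_betw \<pi> {..<l'} {..<l}"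
  shows "relabel \<pi> ` nodes q l' = nodes q l"
proof -
  have "relabel \<pi> ` nodes q l' = Lat ` \<pi> ` {..<l'} \<union> Obs ` {..<q}"
    unfolding nodes_def by (simp add: image_Un image_image)
  then show ?thesis using bij_betw_imp_surj_on[OF assms] by (simp add: nodes_def)
qed

lemma edges_relabel:
  assumes \<pi>: "bij_betw \<pi> {..<l'} {..<l}"
    and obs: "\<And>k. k < q \<Longrightarrow> children q l A B (Obs k) = children q l' A' B' (Obs k)"
    and lat: "\<And>h. h < l' \<Longrightarrow> children q l A B (Lat (\<pi> h)) = children q l' A' B' (Lat h)"
  shows "(\<lambda>(u, v). (relabel \<pi> u, relabel \<pi> v)) ` edges q l' A' B' = edges q l A B"
proof -
  have ch: "children q l A B (relabel \<pi> u) = children q l' A' B' u" if "u \<in> nodes q l'" for u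
    using that obs lat unfolding nodes_def by (cases u) auto
  have fix_ch: "relabel \<pi> v = v" if "v \<in> children q l' A' B' u" for u v
    using that children_subset_Obs[of q l' A' B' u] by auto
  show ?thesis
  proof (intro Set.set_eqI iffI)
    fix e assume "e \<in> (\<lambda>(u, v). (relabel \<pi> u, relabel \<pi> v)) ` edges q l' A' B'"
    then obtain u v where uv: "u \<in> nodes q l'" "v \<in> children q l' A' B' u"
        and e: "e = (relabel \<pi> u, relabel \<pi> v)"
      unfolding edges_eq_Sigma by (auto elim!: imageE)
    have "relabel \<pi> u \<in> nodes q l" using relabel_nodes[OF \<pi>] uv(1) by blast
    then show "e \<in> edges q l A B"
      unfolding e edges_eq_Sigma fix_ch[OF uv(2)] using ch[OF uv(1)] uv(2) by simp
  next
    fix e assume "e \<in> edges q l A B"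
    then obtain u v where uv: "u \<in> nodes q l'" "v \<in> children q l A B (relabel \<pi> u)"
        and e: "e = (relabel \<pi> u, v)"
      unfolding edges_eq_Sigma relabel_nodes[OF \<pi>, symmetric] by blast
    have v: "v \<in> children q l' A' B' u" using uv ch by simp
    show "e \<in> (\<lambda>(u, v). (relabel \<pi> u, relabel \<pi> v)) ` edges q l' A' B'"
    proof (rule image_eqI)
      show "e = (\<lambda>(u, v). (relabel \<pi> u, relabel \<pi> v)) (u, v)" using e fix_ch[OF v] by simp
      show "(u, v) \<in> edges q l' A' B'" unfolding edges_eq_Sigma using uv(1) v by simp
    qed
  qed
qed

definition column_node :: "nat \<Rightarrow> nat \<Rightarrow> node" where
  "column_node L c = (if c < L then Lat c else Obs (c - L))"

definition node_column :: "nat \<Rightarrow> node \<Rightarrow> nat" where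
  "node_column L V = (case V of Lat i \<Rightarrow> i | Obs k \<Rightarrow> L + k)"

lemma bij_node_column: "bij_betw (node_column L) (nodes q L) {..<L + q}"
  by (rule bij_betw_byWitness[where f' = "column_node L"])
     (auto simp: nodes_def node_column_def column_node_def)

lemma bij_column_node: "bij_betw (column_node L) {..<L + q} (nodes q L)"
  by (rule bij_betw_byWitness[where f' = "node_column L"])
     (auto simp: nodes_def node_column_def column_node_def)

lemma column_node_column: "V \<in> nodes q L \<Longrightarrow> column_node L (node_column L V) = V"
  by (auto simp: nodes_def node_column_def column_node_def)

lemma finite_nodes: "finite (nodes q l)"
  unfolding nodes_def by simp

lemma card_nodes: "card (nodes q L) = L + q"
  using bij_betw_same_card[OF bij_node_column[of L q]] by simp

fun topo_rank :: "node \<Rightarrow> nat" where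
  "topo_rank (Lat i) = 0"
| "topo_rank (Obs j) = Suc j"

locale linear_sem_ur =
  fixes q l :: nat and A B :: "real mat"
  assumes sem: "sem_ur q l A B"
begin

abbreviation "Nodes \<equiv> nodes q l"
abbreviation "Edges \<equiv> edges q l A B"
abbreviation "Ch \<equiv> children q l A B"
abbreviation "De \<equiv> descendants q l A B"
abbreviation "PCh \<equiv> possible_children q l A B"
abbreviation "TE \<equiv> total_effect q l A B"
abbreviation "ew \<equiv> edge_weight A B"

lemma A_carrier: "A \<in> carrier_mat q q" and B_carrier: "B \<in> carrier_mat q l"
  using sem unfolding sem_ur_def by auto

lemma A_strictly_lower: "j < q \<Longrightarrow> k < q \<Longrightarrow> A $$ (j, k) \<noteq> 0 \<Longrightarrow> k < j"
  using sem unfolding sem_ur_def by (meson not_le)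

lemma edge_cases:
  assumes "(u, v) \<in> Edges"
  obtains i j where "u = Lat i" "v = Obs j" "i < l" "j < q" "B $$ (j, i) \<noteq> 0"
    | k j where "u = Obs k" "v = Obs j" "k < j" "j < q" "A $$ (j, k) \<noteq> 0"
  using assms A_strictly_lower unfolding edges_def by blast

lemma edge_rank_less: "(u, v) \<in> Edges \<Longrightarrow> topo_rank u < topo_rank v"
  by (auto elim: edge_cases)

lemma edge_target_rank_le: "(u, v) \<in> Edges \<Longrightarrow> topo_rank v \<le> q"
  by (auto elim: edge_cases)

lemma edge_weight_nonzero: "(u, v) \<in> Edges \<Longrightarrow> ew u v \<noteq> 0"
  by (auto elim: edge_cases)

lemma trancl_rank_less: "(u, v) \<in> Edges\<^sup>+ \<Longrightarrow> topo_rank u < topo_rank v"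
  by (induct rule: trancl_induct) (auto dest: edge_rank_less)

lemma rtrancl_rank_le: "(u, v) \<in> Edges\<^sup>* \<Longrightarrow> topo_rank u \<le> topo_rank v"
  by (induct rule: rtrancl_induct) (auto dest: edge_rank_less)

lemma children_rank: "c \<in> Ch u \<Longrightarrow> topo_rank u < topo_rank c \<and> topo_rank c \<le> q"
  unfolding children_def using edge_rank_less edge_target_rank_le by auto

lemma children_subset_descendants: "Ch V \<subseteq> De V"
  unfolding children_def descendants_def by auto

lemma descendants_subset_Obs: "De V \<subseteq> Obs ` {..<q}"
  unfolding descendants_def by (auto dest!: tranclD2 edge_in_nodes)

lemma descendants_trans: "X \<in> De V \<Longrightarrow> Y \<in> De X \<Longrightarrow> Y \<in> De V"
  unfolding descendants_def by auto

lemma not_descendant_self: "V \<notin> De V"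
  unfolding descendants_def using trancl_rank_less by blast

lemma not_child_self: "V \<notin> Ch V"
  using children_subset_descendants not_descendant_self by blast

lemma children_subset_nodes: "Ch V \<subseteq> Nodes"
  using children_subset_Obs unfolding nodes_def by blast

lemma first_edge_of_descendant:
  assumes "Y \<in> De V"
  obtains c where "c \<in> Ch V" "c = Y \<or> Y \<in> De c"
  using assms unfolding descendants_def children_def
  by (metis mem_Collect_eq rtrancl_eq_or_trancl tranclD)

lemma dir_paths_unfold:
  "dir_paths q l A B u v =
     (if u = v then {[u]} else {}) \<union> (\<Union>c\<in>Ch u. (#) u ` dir_paths q l A B c v)"
proof (intro Set.set_eqI iffI)
  fix p assume "p \<in> dir_paths q l A B u v"
  then obtain r where p: "p = u # r" "last p = v"
      "\<forall>i. Suc i < length p \<longrightarrow> (p ! i, p ! Suc i) \<in> Edges"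
    unfolding dir_paths_def by (cases p) auto
  show "p \<in> (if u = v then {[u]} else {}) \<union> (\<Union>c\<in>Ch u. (#) u ` dir_paths q l A B c v)"
  proof (cases "r = []")
    case False
    then have "r \<in> dir_paths q l A B (hd r) v" "hd r \<in> Ch u"
      using p chain_Cons_iff[OF False] unfolding dir_paths_def children_def by auto
    then show ?thesis using p(1) by blast
  qed (use p in auto)
next
  fix p assume "p \<in> (if u = v then {[u]} else {}) \<union> (\<Union>c\<in>Ch u. (#) u ` dir_paths q l A B c v)"
  then consider "u = v" "p = [u]" | c r where "c \<in> Ch u" "r \<in> dir_paths q l A B c v" "p = u # r"
    by (auto split: if_splits)
  then show "p \<in> dir_paths q l A B u v"
  proof cases
    case 2
    then have "r \<noteq> []" "hd r = c" by (auto simp: dir_paths_def)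
    with 2 show ?thesis using chain_Cons_iff[of r u Edges] by (auto simp: dir_paths_def children_def)
  qed (auto simp: dir_paths_def)
qed

lemma finite_dir_paths: "finite (dir_paths q l A B u v)"
proof (induct u rule: measure_induct_rule[where f = "\<lambda>u. Suc q - topo_rank u"])
  case (less u)
  have "\<forall>c\<in>Ch u. finite (dir_paths q l A B c v)"
  proof
    fix c assume "c \<in> Ch u"
    then show "finite (dir_paths q l A B c v)" using children_rank[of c u] by (intro less) auto
  qed
  then show ?case by (subst dir_paths_unfold) (auto simp: finite_children)
qed

lemma path_weight_Cons:
  "r \<noteq> [] \<Longrightarrow> path_weight A B (u # r) = ew u (hd r) * path_weight A B r"
  by (cases r) (simp_all add: path_weight_def prod.lessThan_Suc_shift del: prod.lessThan_Suc)

lemma total_effect_unfold: "TE u v = (if u = v then 1 else 0) + (\<Sum>c\<in>Ch u. ew u c * TE c v)"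
proof -
  let ?P = "\<lambda>c. (#) u ` dir_paths q l A B c v"
  let ?S1 = "(if u = v then {[u]} else {}) :: node list set"
  have finite_P: "\<forall>c\<in>Ch u. finite (?P c)" using finite_dir_paths by auto
  have disjoint: "?S1 \<inter> (\<Union>c\<in>Ch u. ?P c) = {}" by (auto simp: dir_paths_def)
  have "TE u v = sum (path_weight A B) ?S1 + sum (path_weight A B) (\<Union>c\<in>Ch u. ?P c)"
    unfolding total_effect_def
    by (subst dir_paths_unfold, rule sum.union_disjoint) (use disjoint finite_P finite_children in auto)
  also have "sum (path_weight A B) ?S1 = (if u = v then 1 else 0)" by (simp add: path_weight_def)
  also have "sum (path_weight A B) (\<Union>c\<in>Ch u. ?P c) = (\<Sum>c\<in>Ch u. sum (path_weight A B) (?P c))"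
    by (rule sum.UNION_disjoint[OF finite_children finite_P]) (auto simp: dir_paths_def)
  also have "\<dots> = (\<Sum>c\<in>Ch u. ew u c * TE c v)"
  proof (rule sum.cong[OF refl])
    fix c
    have "sum (path_weight A B) (?P c) = (\<Sum>r\<in>dir_paths q l A B c v. path_weight A B (u # r))"
      by (subst sum.reindex) (auto simp: inj_on_def)
    also have "\<dots> = (\<Sum>r\<in>dir_paths q l A B c v. ew u c * path_weight A B r)"
      by (rule sum.cong[OF refl]) (auto simp: dir_paths_def path_weight_Cons)
    finally show "sum (path_weight A B) (?P c) = ew u c * TE c v"
      by (simp add: total_effect_def sum_distrib_left)
  qed
  finally show ?thesis .
qed

lemma total_effect_nonzero_imp_reach: "TE u v \<noteq> 0 \<Longrightarrow> (u, v) \<in> Edges\<^sup>*"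
proof (induct u rule: measure_induct_rule[where f = "\<lambda>u. Suc q - topo_rank u"])
  case (less u)
  show ?case
  proof (cases "u = v")
    case False
    with less(2) total_effect_unfold[of u v] have "(\<Sum>c\<in>Ch u. ew u c * TE c v) \<noteq> 0" by simp
    then obtain c where c: "c \<in> Ch u" "ew u c * TE c v \<noteq> 0"
      using sum.not_neutral_contains_not_neutral by blast
    then have "(c, v) \<in> Edges\<^sup>*" using children_rank[of c u] by (intro less) auto
    moreover have "(u, c) \<in> Edges" using c by (simp add: children_def)
    ultimately show ?thesis by (meson converse_rtrancl_into_rtrancl)
  qed simp
qed

lemma total_effect_upstream: "topo_rank v < topo_rank u \<Longrightarrow> TE u v = 0"
  using total_effect_nonzero_imp_reach rtrancl_rank_le by fastforce

lemma total_effect_self: "TE u u = 1"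
proof -
  have "TE c u = 0" if "c \<in> Ch u" for c
    using children_rank[OF that] by (intro total_effect_upstream) simp
  then show ?thesis using total_effect_unfold[of u u] by simp
qed

lemma total_effect_via_children: "u \<noteq> v \<Longrightarrow> TE u v = (\<Sum>c\<in>Ch u. ew u c * TE c v)"
  using total_effect_unfold[of u v] by simp


definition effect_matrix :: "real mat" where
  "effect_matrix = mat q q (\<lambda>(j, k). TE (Obs k) (Obs j))"

lemma effect_matrix_carrier: "effect_matrix \<in> carrier_mat q q"
  unfolding effect_matrix_def by simp

lemma sum_children_Obs:
  "k < q \<Longrightarrow> (\<Sum>c\<in>Ch (Obs k). ew (Obs k) c * g c) = (\<Sum>m<q. A $$ (m, k) * g (Obs m))"
proof -
  assume k: "k < q"
  have "Ch (Obs k) = Obs ` {m. m < q \<and> A $$ (m, k) \<noteq> 0}"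
    using k unfolding children_def edges_def by auto
  then have "(\<Sum>c\<in>Ch (Obs k). ew (Obs k) c * g c) = (\<Sum>m | m < q \<and> A $$ (m, k) \<noteq> 0. A $$ (m, k) * g (Obs m))"
    by (simp add: sum.reindex inj_on_def)
  also have "\<dots> = (\<Sum>m<q. A $$ (m, k) * g (Obs m))"
    by (rule sum.mono_neutral_left) auto
  finally show ?thesis .
qed

lemma sum_children_Lat:
  "i < l \<Longrightarrow> (\<Sum>c\<in>Ch (Lat i). ew (Lat i) c * g c) = (\<Sum>m<q. B $$ (m, i) * g (Obs m))"
proof -
  assume i: "i < l"
  have "Ch (Lat i) = Obs ` {m. m < q \<and> B $$ (m, i) \<noteq> 0}"
    using i unfolding children_def edges_def by auto
  then have "(\<Sum>c\<in>Ch (Lat i). ew (Lat i) c * g c) = (\<Sum>m | m < q \<and> B $$ (m, i) \<noteq> 0. B $$ (m, i) * g (Obs m))"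
    by (simp add: sum.reindex inj_on_def)
  also have "\<dots> = (\<Sum>m<q. B $$ (m, i) * g (Obs m))"
    by (rule sum.mono_neutral_left) auto
  finally show ?thesis .
qed

lemma effect_matrix_left_inverse: "effect_matrix * (1\<^sub>m q - A) = 1\<^sub>m q"
proof (rule eq_matI)
  fix j k assume "j < dim_row (1\<^sub>m q)" and "k < dim_col (1\<^sub>m q)"
  then have j: "j < q" and k: "k < q" by auto
  have "(effect_matrix * (1\<^sub>m q - A)) $$ (j, k)
      = (\<Sum>m<q. TE (Obs m) (Obs j) * ((if m = k then 1 else 0) - A $$ (m, k)))"
    using j k A_carrier by (simp add: effect_matrix_def scalar_prod_def atLeast0LessThan)
  also have "\<dots> = (\<Sum>m<q. if m = k then TE (Obs m) (Obs j) else 0)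
      - (\<Sum>m<q. A $$ (m, k) * TE (Obs m) (Obs j))"
    by (simp add: right_diff_distrib sum_subtractf mult.commute[of "TE _ _"] if_distrib[of "\<lambda>x. x * _"]
        cong: if_cong)
  also have "\<dots> = TE (Obs k) (Obs j) - (\<Sum>m<q. A $$ (m, k) * TE (Obs m) (Obs j))"
    using k by simp
  also have "\<dots> = (if k = j then 1 else 0)"
    using total_effect_unfold[of "Obs k" "Obs j"] sum_children_Obs[OF k] by simp
  finally show "(effect_matrix * (1\<^sub>m q - A)) $$ (j, k) = 1\<^sub>m q $$ (j, k)" using j k by auto
qed (use A_carrier effect_matrix_carrier in auto)

lemma inverse_I_minus_A: "the (mat_inverse (1\<^sub>m q - A)) = effect_matrix"
proof -
  have IA: "1\<^sub>m q - A \<in> carrier_mat q q" using A_carrier by (simp add: minus_carrier_mat)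
  have "det effect_matrix * det (1\<^sub>m q - A) = 1"
    using det_mult[OF effect_matrix_carrier IA] effect_matrix_left_inverse by simp
  then have "1\<^sub>m q - A \<in> Units (ring_mat TYPE(real) q ())"
    by (intro det_non_zero_imp_unit[OF IA]) auto
  then obtain X where X: "mat_inverse (1\<^sub>m q - A) = Some X"
    using mat_inverse(1)[OF IA] by fastforce
  then have X1: "X * (1\<^sub>m q - A) = 1\<^sub>m q" and Xc: "X \<in> carrier_mat q q"
    using mat_inverse(2)[OF IA] by auto
  have "X = X * ((1\<^sub>m q - A) * effect_matrix)"
    using mat_mult_left_right_inverse[OF effect_matrix_carrier IA effect_matrix_left_inverse] Xc
    by simp
  also have "\<dots> = effect_matrix"
    using X1 Xc IA effect_matrix_carrier by (simp add: assoc_mult_mat[symmetric])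
  finally show ?thesis using X by simp
qed

lemma mixing_matrix_entry:
  assumes "j < q" "c < l + q"
  shows "mixing_matrix q l A B $$ (j, c) = TE (column_node l c) (Obs j)"
proof (cases "c < l")
  case True
  have "(effect_matrix * B) $$ (j, c) = (\<Sum>m<q. B $$ (m, c) * TE (Obs m) (Obs j))"
    using assms True B_carrier
    by (simp add: effect_matrix_def scalar_prod_def atLeast0LessThan mult.commute)
  also have "\<dots> = TE (Lat c) (Obs j)"
    using total_effect_via_children[of "Lat c" "Obs j"] sum_children_Lat[OF True] by simp
  finally show ?thesis
    using assms True by (simp add: mixing_matrix_def Let_def inverse_I_minus_A column_node_def)
qed (use assms in \<open>simp add: mixing_matrix_def Let_def inverse_I_minus_A column_node_def effect_matrix_def\<close>)

text \<open>The vectors TC(X, \<cdot>) of observed variables are unitriangular with respect to the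
  topological order, hence linearly independent.\<close>

lemma observed_effects_independent:
  assumes J: "J \<subseteq> Obs ` {..<q}"
    and comb: "\<And>x. Obs x \<in> J \<Longrightarrow> (\<Sum>Y\<in>J. f Y * TE Y (Obs x)) = 0"
    and Y: "Y \<in> J"
  shows "f Y = 0"
proof (rule ccontr)
  assume "f Y \<noteq> 0"
  let ?K = "{j. Obs j \<in> J \<and> f (Obs j) \<noteq> 0}"
  have finite_K: "finite ?K" using J by (auto intro: finite_subset[of _ "{..<q}"])
  have "?K \<noteq> {}" using J Y \<open>f Y \<noteq> 0\<close> by auto
  define m where "m = Min ?K"
  have m: "Obs m \<in> J" "f (Obs m) \<noteq> 0" using Min_in[OF finite_K \<open>?K \<noteq> {}\<close>] by (auto simp: m_def)
  have "f Z * TE Z (Obs m) = 0" if Z: "Z \<in> J - {Obs m}" for Z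
  proof -
    obtain j where j: "Z = Obs j" using J Z by auto
    have "m < j" if "f Z \<noteq> 0"
      using Min_le[OF finite_K, of j] that Z j by (auto simp: m_def)
    then show ?thesis using total_effect_upstream[of "Obs m" Z] j by fastforce
  qed
  then have "(\<Sum>Z\<in>J - {Obs m}. f Z * TE Z (Obs m)) = 0" by (rule sum.neutral[OF ballI])
  then have "(\<Sum>Z\<in>J. f Z * TE Z (Obs m)) = f (Obs m)"
    using m(1) finite_subset[OF J] by (simp add: sum.remove total_effect_self)
  then show False using comb[OF m(1)] m(2) by simp
qed

lemma effect_expand_over_children:
  assumes "finite J" "Ch U \<subseteq> J" "U \<noteq> Obs x"
  shows "TE U (Obs x) = (\<Sum>Y\<in>J. (if Y \<in> Ch U then ew U Y else 0) * TE Y (Obs x))"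
proof -
  have "TE U (Obs x) = (\<Sum>Y\<in>J \<inter> Ch U. ew U Y * TE Y (Obs x))"
    using total_effect_via_children[OF assms(3)] assms(2) by (simp add: Int_absorb1)
  also have "\<dots> = (\<Sum>Y\<in>J. (if Y \<in> Ch U then ew U Y else 0) * TE Y (Obs x))"
    using assms(1) by (auto simp: sum.inter_restrict intro!: sum.cong)
  finally show ?thesis .
qed

definition obs_coeff :: "node \<Rightarrow> node \<Rightarrow> real" where
  "obs_coeff U Y = (if is_latent U then (if Y \<in> Ch U then ew U Y else 0) else (if Y = U then 1 else 0))"

lemma total_effect_obs_coeff:
  assumes J: "finite J" and lat: "is_latent U \<Longrightarrow> Ch U \<subseteq> J" and obs: "\<not> is_latent U \<Longrightarrow> U \<in> J"
  shows "TE U (Obs x) = (\<Sum>Y\<in>J. obs_coeff U Y * TE Y (Obs x))"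
proof (cases "is_latent U")
  case True
  then have "TE U (Obs x) = (\<Sum>Y\<in>J. (if Y \<in> Ch U then ew U Y else 0) * TE Y (Obs x))"
    using J lat by (intro effect_expand_over_children) (auto simp: is_latent_def)
  then show ?thesis by (simp add: obs_coeff_def True)
next
  case False
  have "(\<Sum>Y\<in>J. obs_coeff U Y * TE Y (Obs x)) = (\<Sum>Y\<in>J. if Y = U then TE U (Obs x) else 0)"
    by (rule sum.cong) (simp_all add: obs_coeff_def False)
  also have "\<dots> = TE U (Obs x)" using obs False J by simp
  finally show ?thesis by simp
qed

end

lemma TC_in_span_Obs_iff:
  "TC_in_span q l A B V (Obs ` D) S \<longleftrightarrow>
     (\<exists>c. \<forall>j\<in>D. total_effect q l A B V (Obs j) = (\<Sum>U\<in>S. c U * total_effect q l A B U (Obs j)))"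
  unfolding TC_in_span_def by auto

locale faithful_sem_ur = linear_sem_ur +
  assumes faithful: "sem_ur_faithful q l A B"
begin

lemma faithful_a: "V \<in> Nodes \<Longrightarrow> X \<in> De V \<Longrightarrow> TE V X \<noteq> 0"
  using conjunct1[OF faithful[unfolded sem_ur_faithful_def]] by blast

lemma faithful_b1:
  assumes "V \<in> Nodes" "S \<subseteq> PCh V" "card S \<le> card (Ch V)" "TC_in_span q l A B V (De V) S"
  shows "card S = card (Ch V) \<and> (\<forall>U\<in>S. is_latent U \<longrightarrow> Ch U \<subseteq> Ch V)"
  using conjunct1[OF conjunct2[OF faithful[unfolded sem_ur_faithful_def]]] assms by blast

lemma faithful_b2:
  assumes "V \<in> Nodes" "is_latent V" "X \<in> Ch V" "S \<subseteq> PCh X"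
    "card S \<le> card (Ch X \<union> Ch V) - 1" "TC_in_span q l A B V (De V - {X}) S"
  shows "card S = card (Ch X \<union> Ch V) - 1"
  using conjunct2[OF conjunct2[OF faithful[unfolded sem_ur_faithful_def]]] assms by blast

definition effect_supp :: "node \<Rightarrow> nat set" where
  "effect_supp V = {j. j < q \<and> TE V (Obs j) \<noteq> 0}"

definition desc_idx :: "node \<Rightarrow> nat set" where
  "desc_idx V = {j. Obs j \<in> De V}"

lemma descendants_eq_image: "De V = Obs ` desc_idx V"
  using descendants_subset_Obs unfolding desc_idx_def by auto

lemma desc_idx_subset: "desc_idx V \<subseteq> {..<q}"
  using descendants_subset_Obs unfolding desc_idx_def by auto

lemma finite_desc_idx: "finite (desc_idx V)"
  using finite_subset[OF desc_idx_subset] by simp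

lemma total_effect_nonzero_iff:
  "V \<in> Nodes \<Longrightarrow> TE V (Obs j) \<noteq> 0 \<longleftrightarrow> V = Obs j \<or> Obs j \<in> De V"
  using total_effect_nonzero_imp_reach[of V "Obs j"] total_effect_self faithful_a
  unfolding descendants_def by (auto simp: rtrancl_eq_or_trancl)

lemma effect_supp_eq: "V \<in> Nodes \<Longrightarrow> effect_supp V = {j. j < q \<and> V = Obs j} \<union> desc_idx V"
  unfolding effect_supp_def desc_idx_def using total_effect_nonzero_iff descendants_subset_Obs
  by auto

lemma effect_supp_Lat: "Lat h \<in> Nodes \<Longrightarrow> effect_supp (Lat h) = desc_idx (Lat h)"
  using effect_supp_eq by auto

lemma effect_supp_Obs: "k < q \<Longrightarrow> effect_supp (Obs k) = insert k (desc_idx (Obs k))"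
  using effect_supp_eq[of "Obs k"] unfolding nodes_def by auto

lemma desc_idx_Obs_gt: "j \<in> desc_idx (Obs k) \<Longrightarrow> k < j"
  unfolding desc_idx_def descendants_def using trancl_rank_less by fastforce

lemma Min_effect_supp_Obs: "k < q \<Longrightarrow> Min (effect_supp (Obs k)) = k"
  using effect_supp_Obs desc_idx_Obs_gt finite_desc_idx
  by (intro Min_eqI) (auto simp: less_imp_le)

lemma effect_supp_descendant: "c \<in> De V \<Longrightarrow> effect_supp c \<subseteq> desc_idx V"
proof -
  assume c: "c \<in> De V"
  then obtain j where "j < q" "c = Obs j" using descendants_subset_Obs by auto
  moreover have "desc_idx c \<subseteq> desc_idx V" using descendants_trans c unfolding desc_idx_def by blast
  ultimately show ?thesis using c effect_supp_Obs by (auto simp: desc_idx_def)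
qed

lemma effect_supp_mono:
  assumes V: "V \<in> Nodes" and k: "k \<in> effect_supp V"
  shows "effect_supp (Obs k) \<subseteq> effect_supp V"
proof -
  have "V = Obs k \<or> Obs k \<in> De V" using k effect_supp_eq[OF V] by (auto simp: desc_idx_def)
  then show ?thesis
  proof
    assume "Obs k \<in> De V"
    then show ?thesis using effect_supp_descendant effect_supp_eq[OF V] by blast
  qed simp
qed

lemma child_effect_supp: "c \<in> Ch V \<Longrightarrow> effect_supp c \<noteq> {} \<and> Obs (Min (effect_supp c)) = c"
proof -
  assume "c \<in> Ch V"
  then obtain j where "j < q" "c = Obs j" using children_subset_Obs by blast
  then show ?thesis using Min_effect_supp_Obs effect_supp_Obs by simp
qed

lemma Min_desc_idx_Lat_is_child:
  assumes "desc_idx (Lat h) \<noteq> {}"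
  shows "Obs (Min (desc_idx (Lat h))) \<in> Ch (Lat h)"
proof -
  let ?m = "Min (desc_idx (Lat h))"
  have "Obs ?m \<in> De (Lat h)"
    using Min_in[OF finite_desc_idx assms] by (simp add: desc_idx_def)
  then obtain c where c: "c \<in> Ch (Lat h)" "c = Obs ?m \<or> Obs ?m \<in> De c"
    by (rule first_edge_of_descendant)
  obtain j where j: "c = Obs j" using c(1) children_subset_Obs by blast
  have "j \<in> desc_idx (Lat h)"
    using c(1) j children_subset_descendants by (auto simp: desc_idx_def)
  then have "?m \<le> j" by (rule Min_le[OF finite_desc_idx])
  moreover have "Obs ?m \<in> De c \<Longrightarrow> j < ?m"
    using j desc_idx_Obs_gt by (simp add: desc_idx_def)
  ultimately show ?thesis using c j by fastforce
qed

lemma Min_effect_supp: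
  assumes "U \<in> Nodes" "effect_supp U \<noteq> {}"
  shows "U = Obs (Min (effect_supp U)) \<or> (is_latent U \<and> Obs (Min (effect_supp U)) \<in> Ch U)"
proof (cases U)
  case (Lat h)
  then show ?thesis
    using assms effect_supp_Lat Min_desc_idx_Lat_is_child by (auto simp: is_latent_def)
next
  case (Obs k)
  then show ?thesis using assms Min_effect_supp_Obs unfolding nodes_def by auto
qed

lemma same_effect_supp_as_Obs:
  assumes "U \<in> Nodes" "k < q" "effect_supp U = effect_supp (Obs k)"
  shows "U = Obs k \<or> (\<exists>h. U = Lat h \<and> Obs k \<in> Ch (Lat h))"
  using Min_effect_supp[of U] assms Min_effect_supp_Obs[OF assms(2)] effect_supp_Obs[OF assms(2)]
  by (auto simp: is_latent_def)

lemma desc_idx_Lat_subset: "Ch (Lat h) \<subseteq> De V \<Longrightarrow> desc_idx (Lat h) \<subseteq> desc_idx V"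
proof
  fix j assume sub: "Ch (Lat h) \<subseteq> De V" and "j \<in> desc_idx (Lat h)"
  then obtain c where "c \<in> Ch (Lat h)" "c = Obs j \<or> Obs j \<in> De c"
    by (auto simp: desc_idx_def elim: first_edge_of_descendant)
  then show "j \<in> desc_idx V" using sub descendants_trans by (auto simp: desc_idx_def)
qed

lemma possible_children_char:
  assumes V: "V \<in> Nodes"
  shows "PCh V = {U \<in> Nodes. U \<noteq> V \<and> effect_supp U \<subseteq> desc_idx V}"
proof (intro Set.set_eqI iffI)
  fix U assume U: "U \<in> PCh V"
  show "U \<in> {U \<in> Nodes. U \<noteq> V \<and> effect_supp U \<subseteq> desc_idx V}"
  proof (cases "U \<in> De V")
    case True
    then show ?thesis
      using descendants_subset_Obs not_descendant_self effect_supp_descendant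
      unfolding nodes_def by blast
  next
    case False
    with U obtain h where h: "U = Lat h" "h < l" "Lat h \<noteq> V" "Ch (Lat h) \<subseteq> De V"
      unfolding possible_children_def by auto
    then show ?thesis using desc_idx_Lat_subset effect_supp_Lat unfolding nodes_def by auto
  qed
next
  fix U assume U: "U \<in> {U \<in> Nodes. U \<noteq> V \<and> effect_supp U \<subseteq> desc_idx V}"
  show "U \<in> PCh V"
  proof (cases U)
    case (Obs j)
    then have "j \<in> effect_supp U" using U effect_supp_Obs unfolding nodes_def by auto
    then show ?thesis using U Obs by (auto simp: possible_children_def desc_idx_def)
  next
    case (Lat h)
    have "c \<in> De V" if c: "c \<in> Ch (Lat h)" for c
    proof -
      obtain j where j: "j < q" "c = Obs j" using c children_subset_Obs by blast
      then have "j \<in> effect_supp U"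
        using c U Lat faithful_a[of "Lat h" c] children_subset_descendants
        by (auto simp: effect_supp_def)
      then show "c \<in> De V" using U j by (auto simp: desc_idx_def)
    qed
    then show ?thesis using U Lat unfolding possible_children_def nodes_def by auto
  qed
qed

lemma possible_children_subset_nodes: "V \<in> Nodes \<Longrightarrow> PCh V \<subseteq> Nodes"
  using possible_children_char by auto


lemma card_children_le_span:
  assumes "V \<in> Nodes" "S \<subseteq> PCh V" "TC_in_span q l A B V (De V) S"
  shows "card (Ch V) \<le> card S"
  using faithful_b1[OF assms(1,2) _ assms(3)] by linarith

text \<open>Rewrite the given representation of TC(V) in the observed vectors TC(Y), Y \<in> De(V), by
  expanding V and every latent member of S along its children; linear independence of these
  vectors then forces the coefficient of an observed non-child to vanish.\<close>

lemma span_coefficient_vanishes_off_children: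
  assumes V: "V \<in> Nodes" and S: "S \<subseteq> PCh V"
    and lat: "\<forall>U\<in>S. is_latent U \<longrightarrow> Ch U \<subseteq> Ch V"
    and c: "\<forall>X\<in>De V. TE V X = (\<Sum>U\<in>S. c U * TE U X)"
    and k: "Obs k \<in> S" "Obs k \<notin> Ch V"
  shows "c (Obs k) = 0"
proof -
  define J where "J = De V"
  have J: "J \<subseteq> Obs ` {..<q}" "finite J" "Ch V \<subseteq> J"
    using descendants_subset_Obs children_subset_descendants finite_desc_idx
    unfolding J_def descendants_eq_image by auto
  have finite_S: "finite S"
    using S possible_children_subset_nodes[OF V] finite_nodes finite_subset by metis
  have S_obs: "Obs j \<in> J" if "Obs j \<in> S" for j
    using that S possible_children_char[OF V] effect_supp_Obs
    by (auto simp: J_def desc_idx_def nodes_def)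
  have expand_S: "TE U (Obs x) = (\<Sum>Y\<in>J. obs_coeff U Y * TE Y (Obs x))" if U: "U \<in> S" for U x
  proof (rule total_effect_obs_coeff[OF J(2)])
    show "Ch U \<subseteq> J" if "is_latent U" using that lat U J(3) by blast
    show "U \<in> J" if "\<not> is_latent U" using that U S_obs by (cases U) (auto simp: is_latent_def)
  qed
  have expand_V: "TE V (Obs x) = (\<Sum>Y\<in>J. (if Y \<in> Ch V then ew V Y else 0) * TE Y (Obs x))"
    if "Obs x \<in> J" for x
    using that J not_descendant_self by (intro effect_expand_over_children) (auto simp: J_def)
  have vanishing:
    "(\<Sum>Y\<in>J. ((\<Sum>U\<in>S. c U * obs_coeff U Y) - (if Y \<in> Ch V then ew V Y else 0)) * TE Y (Obs x)) = 0"
    if x: "Obs x \<in> J" for x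
  proof -
    have "(\<Sum>Y\<in>J. (if Y \<in> Ch V then ew V Y else 0) * TE Y (Obs x)) = (\<Sum>U\<in>S. c U * TE U (Obs x))"
      using c x expand_V by (simp add: J_def)
    also have "\<dots> = (\<Sum>Y\<in>J. (\<Sum>U\<in>S. c U * obs_coeff U Y) * TE Y (Obs x))"
      by (simp add: expand_S sum_distrib_left sum_distrib_right mult.assoc sum.swap[of _ J])
    finally show ?thesis by (simp add: left_diff_distrib sum_subtractf)
  qed
  have "(\<Sum>U\<in>S. c U * obs_coeff U (Obs k)) - (if Obs k \<in> Ch V then ew V (Obs k) else 0) = 0"
    using observed_effects_independent[OF J(1) vanishing S_obs[OF k(1)]] by simp
  moreover have "(\<Sum>U\<in>S. c U * obs_coeff U (Obs k)) = c (Obs k)"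
  proof -
    have "obs_coeff U (Obs k) = 0" if "U \<in> S - {Obs k}" for U
      using that lat k(2) by (auto simp: obs_coeff_def)
    then show ?thesis
      using k(1) finite_S by (simp add: sum.remove obs_coeff_def is_latent_def)
  qed
  ultimately show ?thesis using k(2) by simp
qed

lemma observed_in_small_span_is_child:
  assumes V: "V \<in> Nodes" and S: "S \<subseteq> PCh V" and card: "card S \<le> card (Ch V)"
    and span: "TC_in_span q l A B V (De V) S" and k: "Obs k \<in> S"
  shows "Obs k \<in> Ch V"
proof (rule ccontr)
  assume not_child: "Obs k \<notin> Ch V"
  obtain c where c: "\<forall>X\<in>De V. TE V X = (\<Sum>U\<in>S. c U * TE U X)"
    using span unfolding TC_in_span_def by blast
  have b1: "card S = card (Ch V)" "\<forall>U\<in>S. is_latent U \<longrightarrow> Ch U \<subseteq> Ch V"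
    using faithful_b1[OF V S card span] by auto
  have finite_S: "finite S"
    using S possible_children_subset_nodes[OF V] finite_nodes finite_subset by metis
  have "c (Obs k) = 0"
    using span_coefficient_vanishes_off_children[OF V S b1(2) c k not_child] .
  then have "TC_in_span q l A B V (De V) (S - {Obs k})"
    using c k finite_S unfolding TC_in_span_def by (auto simp: sum.remove)
  then have "card (S - {Obs k}) = card (Ch V)"
    using faithful_b1[OF V _ _] S card by (meson Diff_subset card_Diff1_le le_trans order_trans)
  then show False using b1(1) k finite_S card_Diff1_less by fastforce
qed

lemma span_covers_children:
  assumes V: "V \<in> Nodes" and S: "S \<subseteq> PCh V" and card: "card S \<le> card (Ch V)"
    and span: "TC_in_span q l A B V (De V) S" and U: "U \<in> S" and ne: "effect_supp U \<noteq> {}"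
  shows "Obs (Min (effect_supp U)) \<in> Ch V"
proof -
  have "U \<in> Nodes" using U S possible_children_subset_nodes[OF V] by blast
  from Min_effect_supp[OF this ne] show ?thesis
  proof
    assume "U = Obs (Min (effect_supp U))"
    then show ?thesis using observed_in_small_span_is_child[OF V S card span] U by metis
  next
    assume "is_latent U \<and> Obs (Min (effect_supp U)) \<in> Ch U"
    then show ?thesis using faithful_b1[OF V S card span] U by blast
  qed
qed


lemma total_effect_on_descendant_via_children:
  "j \<in> desc_idx V \<Longrightarrow> TE V (Obs j) = (\<Sum>c\<in>Ch V. ew V c * TE c (Obs j))"
  using not_descendant_self by (intro total_effect_via_children) (auto simp: desc_idx_def)

lemma TC_in_span_children: "TC_in_span q l A B V (Obs ` desc_idx V) (Ch V)"
  unfolding TC_in_span_Obs_iff using total_effect_on_descendant_via_children by blast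

lemma latent_parent_span_by_grandchildren:
  assumes X: "Obs k \<in> Ch (Lat h)" and sub: "Ch (Lat h) - {Obs k} \<subseteq> Ch (Obs k)"
  shows "TC_in_span q l A B (Lat h) (Obs ` desc_idx (Obs k)) (Ch (Obs k))"
  unfolding TC_in_span_Obs_iff
proof (intro exI ballI)
  fix j assume j: "j \<in> desc_idx (Obs k)"
  let ?w = "ew (Lat h) (Obs k)"
  have "TE (Lat h) (Obs j) = ?w * TE (Obs k) (Obs j)
      + (\<Sum>c\<in>Ch (Lat h) - {Obs k}. ew (Lat h) c * TE c (Obs j))"
    using total_effect_via_children[of "Lat h" "Obs j"] X finite_children by (simp add: sum.remove)
  also have "(\<Sum>c\<in>Ch (Lat h) - {Obs k}. ew (Lat h) c * TE c (Obs j))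
      = (\<Sum>c\<in>Ch (Obs k). (if c \<in> Ch (Lat h) then ew (Lat h) c else 0) * TE c (Obs j))"
    using sub not_child_self finite_children
    by (intro sum.mono_neutral_cong_left) auto
  also have "TE (Obs k) (Obs j) = (\<Sum>c\<in>Ch (Obs k). ew (Obs k) c * TE c (Obs j))"
    using j by (rule total_effect_on_descendant_via_children)
  finally show "TE (Lat h) (Obs j) = (\<Sum>c\<in>Ch (Obs k).
      (?w * ew (Obs k) c + (if c \<in> Ch (Lat h) then ew (Lat h) c else 0)) * TE c (Obs j))"
    by (simp add: sum_distrib_left sum.distrib[symmetric] distrib_right mult.assoc)
qed

text \<open>Solving the recursion of TC(H) for the child Obs k.\<close>

lemma child_span_by_latent_parent:
  assumes X: "Obs k \<in> Ch (Lat h)"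
  shows "TC_in_span q l A B (Obs k) (Obs ` J) (insert (Lat h) (Ch (Lat h) - {Obs k}))"
proof -
  let ?w = "ew (Lat h) (Obs k)"
  have w: "?w \<noteq> 0" using X edge_weight_nonzero unfolding children_def by blast
  have Lat_notin: "Lat h \<notin> Ch (Lat h) - {Obs k}" using Lat_notin_children by blast
  define c where "c U = (if U = Lat h then 1 / ?w else - ew (Lat h) U / ?w)" for U
  have "TE (Obs k) Y = (\<Sum>U\<in>insert (Lat h) (Ch (Lat h) - {Obs k}). c U * TE U Y)"
    if "Y \<in> Obs ` J" for Y
  proof -
    have "TE (Lat h) Y = ?w * TE (Obs k) Y + (\<Sum>U\<in>Ch (Lat h) - {Obs k}. ew (Lat h) U * TE U Y)"
      using total_effect_via_children[of "Lat h" Y] that X finite_children by (auto simp: sum.remove)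
    moreover have "(\<Sum>U\<in>Ch (Lat h) - {Obs k}. c U * TE U Y)
        = (\<Sum>U\<in>Ch (Lat h) - {Obs k}. - (ew (Lat h) U * TE U Y) / ?w)"
      using Lat_notin by (intro sum.cong refl) (auto simp: c_def)
    then have "(\<Sum>U\<in>Ch (Lat h) - {Obs k}. c U * TE U Y)
        = - (\<Sum>U\<in>Ch (Lat h) - {Obs k}. ew (Lat h) U * TE U Y) / ?w"
      by (simp add: sum_divide_distrib sum_negf)
    ultimately show ?thesis
      using finite_children Lat_notin w by (simp add: c_def field_simps)
  qed
  then show ?thesis unfolding TC_in_span_def by blast
qed

end

locale mixing_equivalent = M: faithful_sem_ur q l A B + M': faithful_sem_ur q l' A' B'
  for q l l' A B A' B' +
  fixes \<sigma> :: "node \<Rightarrow> node" and \<kappa> :: "node \<Rightarrow> real"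
  assumes bij: "bij_betw \<sigma> (nodes q l') (nodes q l)"
    and scale_nonzero: "\<And>V. V \<in> nodes q l' \<Longrightarrow> \<kappa> V \<noteq> 0"
    and effects_scaled: "\<And>V j. V \<in> nodes q l' \<Longrightarrow> j < q \<Longrightarrow>
       total_effect q l' A' B' V (Obs j) = \<kappa> V * total_effect q l A B (\<sigma> V) (Obs j)"
begin

abbreviation "\<sigma>' \<equiv> inv_into (nodes q l') \<sigma>"

lemma \<sigma>_nodes: "V \<in> M'.Nodes \<Longrightarrow> \<sigma> V \<in> M.Nodes"
  by (rule bij_betw_apply[OF bij])

lemma \<sigma>_eq_iff: "V \<in> M'.Nodes \<Longrightarrow> W \<in> M'.Nodes \<Longrightarrow> \<sigma> V = \<sigma> W \<longleftrightarrow> V = W"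
  using bij_betw_imp_inj_on[OF bij] by (auto dest: inj_onD)

lemma \<sigma>'_nodes: "U \<in> M.Nodes \<Longrightarrow> \<sigma>' U \<in> M'.Nodes"
  using bij_betw_apply[OF bij_betw_inv_into[OF bij]] .

lemma \<sigma>_\<sigma>': "U \<in> M.Nodes \<Longrightarrow> \<sigma> (\<sigma>' U) = U"
  using bij_betw_inv_into_right[OF bij] .

lemma \<sigma>'_\<sigma>: "V \<in> M'.Nodes \<Longrightarrow> \<sigma>' (\<sigma> V) = V"
  using bij_betw_inv_into_left[OF bij] .

lemma inj_on_\<sigma>': "S \<subseteq> M.Nodes \<Longrightarrow> inj_on \<sigma>' S"
  using inj_on_subset[OF bij_betw_imp_inj_on[OF bij_betw_inv_into[OF bij]]] .

lemma swap: "mixing_equivalent q l' l A' B' A B \<sigma>' (\<lambda>V. 1 / \<kappa> (\<sigma>' V))"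
proof (unfold_locales)
  show "bij_betw \<sigma>' (nodes q l) (nodes q l')" using bij by (rule bij_betw_inv_into)
  fix V assume V: "V \<in> nodes q l"
  show "1 / \<kappa> (\<sigma>' V) \<noteq> 0" using scale_nonzero \<sigma>'_nodes[OF V] by simp
  fix j assume "j < q"
  then show "M.TE V (Obs j) = 1 / \<kappa> (\<sigma>' V) * M'.TE (\<sigma>' V) (Obs j)"
    using effects_scaled[OF \<sigma>'_nodes[OF V]] \<sigma>_\<sigma>'[OF V] scale_nonzero[OF \<sigma>'_nodes[OF V]] by simp
qed

lemma effect_supp_\<sigma>: "V \<in> M'.Nodes \<Longrightarrow> M'.effect_supp V = M.effect_supp (\<sigma> V)"
  unfolding M'.effect_supp_def M.effect_supp_def using effects_scaled scale_nonzero by auto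

lemma effect_supp_\<sigma>': "U \<in> M.Nodes \<Longrightarrow> M'.effect_supp (\<sigma>' U) = M.effect_supp U"
  using effect_supp_\<sigma>[OF \<sigma>'_nodes] \<sigma>_\<sigma>' by simp

text \<open>k lies in the support of the column of Obs k in either model, and supports grow along
  ancestors; applied in both directions this gives equality.\<close>

lemma effect_supp_Obs_eq:
  assumes k: "k < q"
  shows "M.effect_supp (Obs k) = M'.effect_supp (Obs k)"
proof
  have k_nodes: "Obs k \<in> M.Nodes" "Obs k \<in> M'.Nodes" using k by (auto simp: nodes_def)
  have "k \<in> M.effect_supp (\<sigma> (Obs k))"
    using effect_supp_\<sigma>[OF k_nodes(2)] M'.effect_supp_Obs[OF k] by (metis insertI1)
  then show "M.effect_supp (Obs k) \<subseteq> M'.effect_supp (Obs k)"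
    using M.effect_supp_mono[OF \<sigma>_nodes[OF k_nodes(2)]] effect_supp_\<sigma>[OF k_nodes(2)] by simp
  have "k \<in> M'.effect_supp (\<sigma>' (Obs k))"
    using effect_supp_\<sigma>'[OF k_nodes(1)] M.effect_supp_Obs[OF k] by (metis insertI1)
  then show "M'.effect_supp (Obs k) \<subseteq> M.effect_supp (Obs k)"
    using M'.effect_supp_mono[OF \<sigma>'_nodes[OF k_nodes(1)]] effect_supp_\<sigma>'[OF k_nodes(1)] by simp
qed

lemma desc_idx_Obs_eq: "k < q \<Longrightarrow> M.desc_idx (Obs k) = M'.desc_idx (Obs k)"
  using effect_supp_Obs_eq M.effect_supp_Obs M'.effect_supp_Obs M.desc_idx_Obs_gt M'.desc_idx_Obs_gt
  by (metis Diff_insert_absorb less_irrefl)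

lemma \<sigma>_Obs_cases:
  assumes k: "k < q"
  shows "M.effect_supp (\<sigma> (Obs k)) = M.effect_supp (Obs k)"
    and "\<sigma> (Obs k) = Obs k \<or> (\<exists>h. \<sigma> (Obs k) = Lat h \<and> Obs k \<in> M.Ch (Lat h))"
proof -
  have k_nodes: "Obs k \<in> M'.Nodes" using k by simp
  show supp: "M.effect_supp (\<sigma> (Obs k)) = M.effect_supp (Obs k)"
    using effect_supp_\<sigma>[OF k_nodes] effect_supp_Obs_eq[OF k] by simp
  show "\<sigma> (Obs k) = Obs k \<or> (\<exists>h. \<sigma> (Obs k) = Lat h \<and> Obs k \<in> M.Ch (Lat h))"
    by (rule M.same_effect_supp_as_Obs[OF \<sigma>_nodes[OF k_nodes] k supp])
qed

lemma span_transfer: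
  assumes V: "V \<in> M'.Nodes" and S: "S \<subseteq> M'.Nodes" and D: "D \<subseteq> {..<q}"
    and span: "TC_in_span q l' A' B' V (Obs ` D) S"
  shows "TC_in_span q l A B (\<sigma> V) (Obs ` D) (\<sigma> ` S)"
proof -
  obtain c where c: "\<forall>j\<in>D. M'.TE V (Obs j) = (\<Sum>U\<in>S. c U * M'.TE U (Obs j))"
    using span unfolding TC_in_span_Obs_iff by blast
  have "M.TE (\<sigma> V) (Obs j) = (\<Sum>U\<in>\<sigma> ` S. c (\<sigma>' U) * \<kappa> (\<sigma>' U) / \<kappa> V * M.TE U (Obs j))"
    if j: "j \<in> D" for j
  proof -
    have "inj_on \<sigma> S" using S inj_on_subset[OF bij_betw_imp_inj_on[OF bij]] by blast
    then have "(\<Sum>U\<in>\<sigma> ` S. c (\<sigma>' U) * \<kappa> (\<sigma>' U) / \<kappa> V * M.TE U (Obs j))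
        = (\<Sum>U\<in>S. c (\<sigma>' (\<sigma> U)) * \<kappa> (\<sigma>' (\<sigma> U)) / \<kappa> V * M.TE (\<sigma> U) (Obs j))"
      by (simp add: sum.reindex)
    also have "\<dots> = (\<Sum>U\<in>S. c U * M'.TE U (Obs j) / \<kappa> V)"
    proof (rule sum.cong[OF refl])
      fix U assume "U \<in> S"
      then have U: "U \<in> M'.Nodes" using S by blast
      show "c (\<sigma>' (\<sigma> U)) * \<kappa> (\<sigma>' (\<sigma> U)) / \<kappa> V * M.TE (\<sigma> U) (Obs j) = c U * M'.TE U (Obs j) / \<kappa> V"
        using \<sigma>'_\<sigma>[OF U] effects_scaled[OF U] j D by auto
    qed
    also have "\<dots> = M'.TE V (Obs j) / \<kappa> V" using c j by (simp add: sum_divide_distrib)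
    also have "\<dots> = M.TE (\<sigma> V) (Obs j)" using effects_scaled[OF V] j D scale_nonzero[OF V] by auto
    finally show ?thesis by simp
  qed
  then show ?thesis
    unfolding TC_in_span_Obs_iff by (intro exI[of _ "\<lambda>U. c (\<sigma>' U) * \<kappa> (\<sigma>' U) / \<kappa> V"]) blast
qed

lemma span_transfer_inv:
  assumes "U \<in> M.Nodes" "S \<subseteq> M.Nodes" "D \<subseteq> {..<q}" "TC_in_span q l A B U (Obs ` D) S"
  shows "TC_in_span q l' A' B' (\<sigma>' U) (Obs ` D) (\<sigma>' ` S)"
proof -
  interpret inv: mixing_equivalent q l' l A' B' A B \<sigma>' "\<lambda>V. 1 / \<kappa> (\<sigma>' V)" by (rule swap)
  show ?thesis by (rule inv.span_transfer[OF assms])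
qed


text \<open>A representation of the column of \<sigma> V' by few possible children in M is pulled back
  to M', where faithfulness (b1) of M' bounds and covers the children of V'.\<close>

lemma children_bound_from_span:
  assumes V': "V' \<in> M'.Nodes" and S: "S \<subseteq> M.Nodes"
    and supp: "\<forall>U\<in>S. M.effect_supp U \<subseteq> M'.desc_idx V'" and not_in: "\<sigma> V' \<notin> S"
    and span: "TC_in_span q l A B (\<sigma> V') (Obs ` M'.desc_idx V') S"
  shows "card (M'.Ch V') \<le> card S"
    and "card S \<le> card (M'.Ch V') \<Longrightarrow> U \<in> S \<Longrightarrow> M.effect_supp U \<noteq> {} \<Longrightarrow>
      Obs (Min (M.effect_supp U)) \<in> M'.Ch V'"
proof -
  let ?S' = "\<sigma>' ` S"
  have card: "card ?S' = card S" using card_image[OF inj_on_\<sigma>'[OF S]] .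
  have supp': "M'.effect_supp (\<sigma>' U) = M.effect_supp U" if "U \<in> S" for U
    using that S effect_supp_\<sigma>' by blast
  have S'_PCh: "?S' \<subseteq> M'.PCh V'"
  proof
    fix U' assume "U' \<in> ?S'"
    then obtain U where U: "U \<in> S" "U' = \<sigma>' U" by blast
    then have "U' \<noteq> V'" using not_in S \<sigma>_\<sigma>' by force
    then show "U' \<in> M'.PCh V'"
      unfolding M'.possible_children_char[OF V'] using U S \<sigma>'_nodes supp' supp by auto
  qed
  have span': "TC_in_span q l' A' B' V' (M'.De V') ?S'"
    using span_transfer_inv[OF \<sigma>_nodes[OF V'] S M'.desc_idx_subset span]
    unfolding \<sigma>'_\<sigma>[OF V'] M'.descendants_eq_image .
  show "card (M'.Ch V') \<le> card S"
    using M'.card_children_le_span[OF V' S'_PCh span'] card by simp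
  assume "card S \<le> card (M'.Ch V')" "U \<in> S" "M.effect_supp U \<noteq> {}"
  then show "Obs (Min (M.effect_supp U)) \<in> M'.Ch V'"
    using M'.span_covers_children[OF V' S'_PCh _ span', of "\<sigma>' U"] card supp' by simp
qed

lemma children_subset_from_span:
  assumes V': "V' \<in> M'.Nodes" and desc: "M.desc_idx W \<subseteq> M'.desc_idx V'"
    and not_child: "\<sigma> V' \<notin> M.Ch W"
    and span: "TC_in_span q l A B (\<sigma> V') (Obs ` M'.desc_idx V') (M.Ch W)"
  shows "card (M'.Ch V') \<le> card (M.Ch W)"
    and "card (M.Ch W) \<le> card (M'.Ch V') \<Longrightarrow> M.Ch W \<subseteq> M'.Ch V'"
proof -
  have supp: "\<forall>U\<in>M.Ch W. M.effect_supp U \<subseteq> M'.desc_idx V'"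
    using M.effect_supp_descendant M.children_subset_descendants desc by blast
  note bound = children_bound_from_span[OF V' M.children_subset_nodes supp not_child span]
  show "card (M'.Ch V') \<le> card (M.Ch W)" by (rule bound(1))
  show "M.Ch W \<subseteq> M'.Ch V'" if card: "card (M.Ch W) \<le> card (M'.Ch V')"
  proof
    fix c assume c: "c \<in> M.Ch W"
    then show "c \<in> M'.Ch V'" using bound(2)[OF card c] M.child_effect_supp[OF c] by simp
  qed
qed

lemma latent_image_children_card:
  assumes k: "k < q" and h: "\<sigma> (Obs k) = Lat h"
  shows "card (M.Ch (Obs k) \<union> M.Ch (Lat h)) \<le> Suc (card (M'.Ch (Obs k)))"
proof -
  have X': "Obs k \<in> M'.Nodes" using k by simp
  have H: "Lat h \<in> M.Nodes" using \<sigma>_nodes[OF X'] h by simp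
  have supp_H: "M.effect_supp (Lat h) = M.effect_supp (Obs k)" using \<sigma>_Obs_cases(1)[OF k] h by simp
  have X: "Obs k \<in> M.Ch (Lat h)" using \<sigma>_Obs_cases(2)[OF k] h by auto
  let ?S = "\<sigma> ` M'.Ch (Obs k)"
  have card: "card ?S = card (M'.Ch (Obs k))"
    using card_image inj_on_subset[OF bij_betw_imp_inj_on[OF bij] M'.children_subset_nodes] by blast
  have supp: "M.effect_supp U \<subseteq> M.desc_idx (Obs k)" if "U \<in> ?S" for U
    using that effect_supp_\<sigma> M'.children_subset_nodes M'.effect_supp_descendant
      M'.children_subset_descendants desc_idx_Obs_eq[OF k] by fastforce
  have S_PCh: "?S \<subseteq> M.PCh (Obs k)"
  proof
    fix U assume U: "U \<in> ?S"
    have "U \<noteq> Obs k" using supp[OF U] M.effect_supp_Obs[OF k] M.desc_idx_Obs_gt by blast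
    moreover have "U \<in> M.Nodes" using U \<sigma>_nodes M'.children_subset_nodes by blast
    moreover have "Obs k \<in> M.Nodes" using k by simp
    ultimately show "U \<in> M.PCh (Obs k)" using M.possible_children_char supp[OF U] by simp
  qed
  have "M.desc_idx (Lat h) = insert k (M.desc_idx (Obs k))"
    using M.effect_supp_Lat[OF H] supp_H M.effect_supp_Obs[OF k] by simp
  moreover have "k \<notin> M.desc_idx (Obs k)" using M.desc_idx_Obs_gt by blast
  ultimately have "M.De (Lat h) - {Obs k} = Obs ` M.desc_idx (Obs k)"
    unfolding M.descendants_eq_image by auto
  moreover have "TC_in_span q l A B (Lat h) (Obs ` M.desc_idx (Obs k)) ?S"
    using span_transfer[OF X' M'.children_subset_nodes M'.desc_idx_subset M'.TC_in_span_children] h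
      desc_idx_Obs_eq[OF k] by simp
  ultimately have "card ?S \<le> card (M.Ch (Obs k) \<union> M.Ch (Lat h)) - 1 \<Longrightarrow>
      card ?S = card (M.Ch (Obs k) \<union> M.Ch (Lat h)) - 1"
    using M.faithful_b2[OF H _ X S_PCh] by (simp add: is_latent_def)
  then show ?thesis using card by linarith
qed

lemma obs_children_card_le:
  assumes k: "k < q"
  shows "card (M.Ch (Obs k)) \<le> card (M'.Ch (Obs k))"
  using \<sigma>_Obs_cases(2)[OF k]
proof
  assume fixed: "\<sigma> (Obs k) = Obs k"
  interpret inv: mixing_equivalent q l' l A' B' A B \<sigma>' "\<lambda>V. 1 / \<kappa> (\<sigma>' V)" by (rule swap)
  have "\<sigma>' (Obs k) = Obs k" using \<sigma>'_\<sigma>[of "Obs k"] fixed k by simp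
  then show ?thesis
    using inv.children_subset_from_span(1)[of "Obs k" "Obs k"] M'.TC_in_span_children
      M'.not_child_self desc_idx_Obs_eq[OF k] k by simp
next
  assume "\<exists>h. \<sigma> (Obs k) = Lat h \<and> Obs k \<in> M.Ch (Lat h)"
  then obtain h where h: "\<sigma> (Obs k) = Lat h" "Obs k \<in> M.Ch (Lat h)" by blast
  have "Suc (card (M.Ch (Obs k))) \<le> card (M.Ch (Obs k) \<union> M.Ch (Lat h))"
    using h(2) M.not_child_self finite_children
      card_mono[of "M.Ch (Obs k) \<union> M.Ch (Lat h)" "insert (Obs k) (M.Ch (Obs k))"] by simp
  then show ?thesis using latent_image_children_card[OF k h(1)] by simp
qed

lemma obs_children_subset:
  assumes k: "k < q" and card: "card (M'.Ch (Obs k)) \<le> card (M.Ch (Obs k))"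
  shows "M.Ch (Obs k) \<subseteq> M'.Ch (Obs k)"
proof -
  have X: "Obs k \<in> M'.Nodes" using k by simp
  have span: "TC_in_span q l A B (\<sigma> (Obs k)) (Obs ` M.desc_idx (Obs k)) (M.Ch (Obs k))"
    using \<sigma>_Obs_cases(2)[OF k]
  proof
    assume "\<exists>h. \<sigma> (Obs k) = Lat h \<and> Obs k \<in> M.Ch (Lat h)"
    then obtain h where h: "\<sigma> (Obs k) = Lat h" "Obs k \<in> M.Ch (Lat h)" by blast
    have "M.Ch (Lat h) - {Obs k} \<subseteq> M.Ch (Obs k)"
      using subset_if_card_union_le[OF finite_children finite_children h(2) M.not_child_self]
        latent_image_children_card[OF k h(1)] card by simp
    then show ?thesis using M.latent_parent_span_by_grandchildren[OF h(2)] h(1) by simp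
  qed (simp add: M.TC_in_span_children)
  have "\<sigma> (Obs k) \<notin> M.Ch (Obs k)"
    using \<sigma>_Obs_cases(2)[OF k] M.not_child_self Lat_notin_children by metis
  then show ?thesis
    using children_subset_from_span(2)[OF X _ _ _] span card desc_idx_Obs_eq[OF k]
      obs_children_card_le[OF k] by simp
qed


lemma obs_children_eq: "k < q \<Longrightarrow> M.Ch (Obs k) = M'.Ch (Obs k)"
proof -
  assume k: "k < q"
  interpret inv: mixing_equivalent q l' l A' B' A B \<sigma>' "\<lambda>V. 1 / \<kappa> (\<sigma>' V)" by (rule swap)
  have "card (M.Ch (Obs k)) \<le> card (M'.Ch (Obs k))" "card (M'.Ch (Obs k)) \<le> card (M.Ch (Obs k))"
    using obs_children_card_le[OF k] inv.obs_children_card_le[OF k] by auto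
  then show ?thesis using obs_children_subset[OF k] inv.obs_children_subset[OF k] by blast
qed

lemma latent_children_eq_latent_image:
  assumes h': "h' < l'" and h: "\<sigma> (Lat h') = Lat h"
  shows "M.Ch (Lat h) = M'.Ch (Lat h')"
proof -
  interpret inv: mixing_equivalent q l' l A' B' A B \<sigma>' "\<lambda>V. 1 / \<kappa> (\<sigma>' V)" by (rule swap)
  have H': "Lat h' \<in> M'.Nodes" using h' by simp
  have H: "Lat h \<in> M.Nodes" using \<sigma>_nodes[OF H'] h by simp
  have inv_h: "\<sigma>' (Lat h) = Lat h'" using \<sigma>'_\<sigma>[OF H'] h by simp
  have desc: "M.desc_idx (Lat h) = M'.desc_idx (Lat h')"
    using effect_supp_\<sigma>[OF H'] h M.effect_supp_Lat[OF H] M'.effect_supp_Lat[OF H'] by simp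
  have span: "TC_in_span q l A B (\<sigma> (Lat h')) (Obs ` M'.desc_idx (Lat h')) (M.Ch (Lat h))"
    using M.TC_in_span_children[of "Lat h"] desc h by simp
  have span': "TC_in_span q l' A' B' (\<sigma>' (Lat h)) (Obs ` M.desc_idx (Lat h)) (M'.Ch (Lat h'))"
    using M'.TC_in_span_children[of "Lat h'"] desc inv_h by simp
  note fwd = children_subset_from_span[OF H' _ _ span]
  note bwd = inv.children_subset_from_span[OF H _ _ span']
  have "card (M'.Ch (Lat h')) \<le> card (M.Ch (Lat h))" "card (M.Ch (Lat h)) \<le> card (M'.Ch (Lat h'))"
    using fwd(1) bwd(1) desc h inv_h Lat_notin_children by auto
  then show ?thesis using fwd(2) bwd(2) desc h inv_h Lat_notin_children by (intro subset_antisym) auto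
qed

lemma latent_observed_image:
  assumes h': "h' < l'" and k: "\<sigma> (Lat h') = Obs k"
  shows "\<exists>h. \<sigma> (Obs k) = Lat h \<and> card (M'.Ch (Lat h')) \<le> card (M.Ch (Lat h)) \<and>
    (card (M.Ch (Lat h)) \<le> card (M'.Ch (Lat h')) \<longrightarrow> M.Ch (Lat h) \<subseteq> M'.Ch (Lat h'))"
proof -
  have H': "Lat h' \<in> M'.Nodes" using h' by simp
  have kq: "k < q" using \<sigma>_nodes[OF H'] k by simp
  have X': "Obs k \<in> M'.Nodes" using kq by simp
  have "\<sigma> (Obs k) \<noteq> Obs k" using \<sigma>_eq_iff[OF X' H'] k by auto
  then obtain h where h: "\<sigma> (Obs k) = Lat h" "Obs k \<in> M.Ch (Lat h)"
    using \<sigma>_Obs_cases(2)[OF kq] by blast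
  have supp_H: "M.effect_supp (Lat h) = M.effect_supp (Obs k)" using \<sigma>_Obs_cases(1)[OF kq] h by simp
  have H: "Lat h \<in> M.Nodes" using \<sigma>_nodes[OF X'] h by simp
  define S where "S = insert (Lat h) (M.Ch (Lat h) - {Obs k})"
  have S_nodes: "S \<subseteq> M.Nodes" using H M.children_subset_nodes by (auto simp: S_def)
  have desc: "M'.desc_idx (Lat h') = M.effect_supp (Obs k)"
    using M'.effect_supp_Lat[OF H'] effect_supp_\<sigma>[OF H'] k by simp
  have "M.effect_supp c \<subseteq> M.effect_supp (Obs k)" if "c \<in> M.Ch (Lat h)" for c
    using M.effect_supp_descendant[of c "Lat h"] M.children_subset_descendants that
      M.effect_supp_Lat[OF H] supp_H by blast
  then have supp: "\<forall>U\<in>S. M.effect_supp U \<subseteq> M'.desc_idx (Lat h')"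
    using supp_H desc by (auto simp: S_def)
  have not_in: "\<sigma> (Lat h') \<notin> S" using k by (simp add: S_def)
  have span: "TC_in_span q l A B (\<sigma> (Lat h')) (Obs ` M'.desc_idx (Lat h')) S"
    using M.child_span_by_latent_parent[OF h(2)] k by (simp add: S_def)
  have "card (M.Ch (Lat h)) > 0" using h(2) finite_children card_gt_0_iff by blast
  then have card_S: "card S = card (M.Ch (Lat h))"
    using h(2) finite_children Lat_notin_children by (simp add: S_def)
  note bound = children_bound_from_span[OF H' S_nodes supp not_in span]
  have "M.Ch (Lat h) \<subseteq> M'.Ch (Lat h')" if card: "card (M.Ch (Lat h)) \<le> card (M'.Ch (Lat h'))"
  proof
    fix c assume c: "c \<in> M.Ch (Lat h)"
    show "c \<in> M'.Ch (Lat h')"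
    proof (cases "c = Obs k")
      case True
      have "Obs (Min (M.effect_supp (Lat h))) \<in> M'.Ch (Lat h')"
        using bound(2)[of "Lat h"] card card_S supp_H M.effect_supp_Obs[OF kq] by (simp add: S_def)
      then show ?thesis using True supp_H M.Min_effect_supp_Obs[OF kq] by simp
    next
      case False
      then show ?thesis
        using bound(2)[of c] c card card_S M.child_effect_supp[OF c] by (simp add: S_def)
    qed
  qed
  then show ?thesis using h(1) bound(1) card_S by auto
qed

text \<open>The column of a latent H' of M' belongs in M either to a latent, which is the partner of
  H', or to an observed X; in the latter case \<sigma> X is latent and is the partner of H'.\<close>

definition matched_latent :: "nat \<Rightarrow> node" where
  "matched_latent h' = (if is_latent (\<sigma> (Lat h')) then \<sigma> (Lat h') else \<sigma> (\<sigma> (Lat h')))"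

lemma matched_latent_children:
  assumes h': "h' < l'"
  shows "\<exists>h<l. matched_latent h' = Lat h \<and> M.Ch (Lat h) = M'.Ch (Lat h')"
proof -
  have H': "Lat h' \<in> M'.Nodes" using h' by simp
  show ?thesis
  proof (cases "\<sigma> (Lat h')")
    case (Lat h)
    then show ?thesis
      using \<sigma>_nodes[OF H'] latent_children_eq_latent_image[OF h' Lat]
      by (auto simp: matched_latent_def is_latent_def)
  next
    case (Obs k)
    interpret inv: mixing_equivalent q l' l A' B' A B \<sigma>' "\<lambda>V. 1 / \<kappa> (\<sigma>' V)" by (rule swap)
    obtain h where h: "\<sigma> (Obs k) = Lat h" "card (M'.Ch (Lat h')) \<le> card (M.Ch (Lat h))"
        "card (M.Ch (Lat h)) \<le> card (M'.Ch (Lat h')) \<Longrightarrow> M.Ch (Lat h) \<subseteq> M'.Ch (Lat h')"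
      using latent_observed_image[OF h' Obs] by blast
    have X': "Obs k \<in> M'.Nodes" using \<sigma>_nodes[OF H'] Obs by simp
    have hl: "h < l" using \<sigma>_nodes[OF X'] h(1) by simp
    have "\<sigma>' (Lat h) = Obs k" "\<sigma>' (Obs k) = Lat h'"
      using \<sigma>'_\<sigma>[OF X'] \<sigma>'_\<sigma>[OF H'] h(1) Obs by simp_all
    then have "card (M.Ch (Lat h)) \<le> card (M'.Ch (Lat h')) \<and>
        (card (M'.Ch (Lat h')) \<le> card (M.Ch (Lat h)) \<longrightarrow> M'.Ch (Lat h') \<subseteq> M.Ch (Lat h))"
      using inv.latent_observed_image[OF hl] by auto
    then show ?thesis
      using h hl Obs by (auto simp: matched_latent_def is_latent_def)
  qed
qed

lemma inj_on_matched_latent: "inj_on matched_latent {..<l'}"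
proof (rule inj_onI)
  fix a b assume a: "a \<in> {..<l'}" and b: "b \<in> {..<l'}" and eq: "matched_latent a = matched_latent b"
  have A: "Lat a \<in> M'.Nodes" and B: "Lat b \<in> M'.Nodes" using a b by simp_all
  have obs_image: "\<sigma> V \<in> M'.Nodes" if "V \<in> M'.Nodes" "\<not> is_latent (\<sigma> V)" for V
    using \<sigma>_nodes[OF that(1)] that(2) by (cases "\<sigma> V") (auto simp: is_latent_def)
  consider "is_latent (\<sigma> (Lat a)) = is_latent (\<sigma> (Lat b))"
    | "is_latent (\<sigma> (Lat a))" "\<not> is_latent (\<sigma> (Lat b))"
    | "\<not> is_latent (\<sigma> (Lat a))" "is_latent (\<sigma> (Lat b))"
    by blast
  then show "a = b"
  proof cases
    case 1
    then show ?thesis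
      using eq \<sigma>_eq_iff[OF A B] \<sigma>_eq_iff[OF obs_image[OF A] obs_image[OF B]]
      by (auto simp: matched_latent_def split: if_splits)
  next
    case 2
    then have "\<sigma> (Lat b) = Lat a"
      using eq \<sigma>_eq_iff[OF A obs_image[OF B]] by (simp add: matched_latent_def)
    then show ?thesis using 2 by (simp add: is_latent_def)
  next
    case 3
    then have "\<sigma> (Lat a) = Lat b"
      using eq \<sigma>_eq_iff[OF obs_image[OF A] B] by (simp add: matched_latent_def)
    then show ?thesis using 3 by (simp add: is_latent_def)
  qed
qed

lemma causal_diagram_identified:
  "\<exists>\<pi>. bij_betw \<pi> {..<l'} {..<l} \<and>
     (\<lambda>(u, v). (relabel \<pi> u, relabel \<pi> v)) ` edges q l' A' B' = edges q l A B"
proof -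
  define \<pi> where "\<pi> h' = (THE h. matched_latent h' = Lat h)" for h'
  have \<pi>: "\<pi> h' < l \<and> matched_latent h' = Lat (\<pi> h') \<and> M.Ch (Lat (\<pi> h')) = M'.Ch (Lat h')"
    if "h' < l'" for h'
    using matched_latent_children[OF that] unfolding \<pi>_def by auto
  have "inj_on \<pi> {..<l'}"
    using inj_on_matched_latent \<pi> unfolding inj_on_def by (metis lessThan_iff)
  moreover have "\<pi> ` {..<l'} \<subseteq> {..<l}" using \<pi> by auto
  moreover have "l' = l" using bij_betw_same_card[OF bij] card_nodes by simp
  ultimately have "bij_betw \<pi> {..<l'} {..<l}"
    by (simp add: bij_betw_def card_image card_subset_eq)
  then show ?thesis using edges_relabel obs_children_eq \<pi> by blast
qed

end

lemma mixing_equivalent_if_equal_mixing: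
  assumes M: "faithful_sem_ur q l A B" and M': "faithful_sem_ur q l' A' B'"
    and W: "equal_up_to_perm_scaling (mixing_matrix q l' A' B') (mixing_matrix q l A B)"
  shows "\<exists>\<sigma> \<kappa>. mixing_equivalent q l l' A B A' B' \<sigma> \<kappa>"
proof -
  interpret M: faithful_sem_ur q l A B by (rule M)
  interpret M': faithful_sem_ur q l' A' B' by (rule M')
  have dims: "dim_col (mixing_matrix q L AA BB) = L + q" "dim_row (mixing_matrix q L AA BB) = q"
    for L AA BB by (simp_all add: mixing_matrix_def Let_def)
  obtain \<tau> c where \<tau>: "bij_betw \<tau> {..<l' + q} {..<l + q}" and c: "\<forall>i<l' + q. c i \<noteq> (0::real)"
    and entries: "\<forall>j<q. \<forall>i<l' + q.
      mixing_matrix q l' A' B' $$ (j, i) = c i * mixing_matrix q l A B $$ (j, \<tau> i)"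
    using W unfolding equal_up_to_perm_scaling_def dims by blast
  define \<sigma> where "\<sigma> V = column_node l (\<tau> (node_column l' V))" for V
  define \<kappa> where "\<kappa> V = c (node_column l' V)" for V
  have col: "node_column l' V < l' + q" if "V \<in> nodes q l'" for V
    using bij_betw_apply[OF bij_node_column that] by simp
  have \<tau>_col: "\<tau> (node_column l' V) < l + q" if "V \<in> nodes q l'" for V
    using bij_betw_apply[OF \<tau>] col[OF that] by simp
  have "bij_betw \<sigma> (nodes q l') (nodes q l)"
    unfolding \<sigma>_def using bij_betw_trans[OF bij_betw_trans[OF bij_node_column \<tau>] bij_column_node]
    by (simp add: comp_def)
  moreover have "\<kappa> V \<noteq> 0" if "V \<in> nodes q l'" for V
    unfolding \<kappa>_def using c col[OF that] by blast
  moreover have "M'.TE V (Obs j) = \<kappa> V * M.TE (\<sigma> V) (Obs j)" if V: "V \<in> nodes q l'" and j: "j < q" for V j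
    using M'.mixing_matrix_entry[OF j col[OF V]] M.mixing_matrix_entry[OF j \<tau>_col[OF V]]
      entries j col[OF V] column_node_column[OF V] by (simp add: \<sigma>_def \<kappa>_def)
  ultimately show ?thesis
    using M M' by (auto intro!: exI mixing_equivalent.intro mixing_equivalent_axioms.intro)
qed

theorem corollary3:
  fixes q l l' :: nat and A B A' B' :: "real mat"
  assumes "sem_ur q l A B"
    and "sem_ur_faithful q l A B"
    and "sem_ur q l' A' B'"
    and "sem_ur_faithful q l' A' B'"
    and "equal_up_to_perm_scaling (mixing_matrix q l' A' B') (mixing_matrix q l A B)"
  shows "\<exists>\<pi>. bij_betw \<pi> {..<l'} {..<l} \<and>
           (\<lambda>(u, v). (relabel \<pi> u, relabel \<pi> v)) ` edges q l' A' B' = edges q l A B"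
proof -
  have "faithful_sem_ur q l A B" "faithful_sem_ur q l' A' B'"
    using assms(1-4) by (simp_all add: faithful_sem_ur_def linear_sem_ur_def faithful_sem_ur_axioms_def)
  then obtain \<sigma> \<kappa> where "mixing_equivalent q l l' A B A' B' \<sigma> \<kappa>"
    using mixing_equivalent_if_equal_mixing assms(5) by blast
  then show ?thesis by (rule mixing_equivalent.causal_diagram_identified)
qed

end
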